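(* Let $1 \le p < \infty$. Then $J_n$ is the unique Chebyshev center of $\Omega_n$ relative to the metric space $(\Omega_n,\|\cdot\|_{\mathcal{S}_p})$ (i.e. the unique $D\in\Omega_n$ minimizing $\sup_{B\in\Omega_n}\|D-B\|_{\mathcal{S}_p}$), and the corresponding Chebyshev radius is $$ \inf_{D\in \Omega_n}\sup_{B\in\Omega_n}\|D-B\|_{\mathcal{S}_p} = (n-1)^{1/p}. $$
   Context: $\Omega_n$ denotes the set of $n\times n$ doubly stochastic matrices (nonnegative real entries, all row and column sums equal to $1$). $J_n$ is the $n\times n$ matrix with all entries equal to $1/n$. For $p\ge1$, $\|A\|_{\mathcal{S}_p} := \big(\sum_{i=1}^n\sigma_i(A)^p\big)^{1/p}$ where $\sigma_i(A)$ are the singular values of $A$. Given a constraint set $\mathcal{R}\subseteq M_n(\mathbb{R})$ and a norm, the Chebyshev radius of $\Omega_n$ is $\inf_{A\in\mathcal{R}}\sup_{B\in\Omega_n}\|A-B\|$ and a Chebyshev center is any $A\in\mathcal{R}$ attaining this infimum; "relative to the metric space $(\Omega_n,\|\cdot\|)$" means $\mathcal{R}=\Omega_n$. *)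

theory Defs
  imports Jordan_Normal_Form.Char_Poly
begin

definition doubly_stochastic :: "nat \<Rightarrow> real mat set" where
  "doubly_stochastic n = {A. A \<in> carrier_mat n n \<and>
     (\<forall>i<n. \<forall>j<n. A $$ (i,j) \<ge> 0) \<and>
     (\<forall>i<n. (\<Sum>j<n. A $$ (i,j)) = 1) \<and>
     (\<forall>j<n. (\<Sum>i<n. A $$ (i,j)) = 1)}"

definition J_mat :: "nat \<Rightarrow> real mat" where
  "J_mat n = mat n n (\<lambda>_. 1 / real n)"

text \<open>Singular values (with multiplicity): square roots of the eigenvalues of A^T A,
  i.e. of the roots (with multiplicity) of its characteristic polynomial, which
  splits over the reals since A^T A is symmetric positive semidefinite.\<close>
definition singular_values :: "real mat \<Rightarrow> real multiset" where
  "singular_values A = image_mset sqrt (proots (char_poly (transpose_mat A * A)))"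

definition schatten_norm :: "real \<Rightarrow> real mat \<Rightarrow> real" where
  "schatten_norm p A = (\<Sum>s\<in>#singular_values A. s powr p) powr (1 / p)"

definition cheb_dist :: "nat \<Rightarrow> real \<Rightarrow> real mat \<Rightarrow> real" where
  "cheb_dist n p D = (SUP B\<in>doubly_stochastic n. schatten_norm p (D - B))"

end

theory Submission
  imports Defs "Jordan_Normal_Form.Schur_Decomposition"
begin

text \<open>Write J for J_n and \<parallel>A\<parallel> for the Schatten p-norm. For B \<in> \<Omega>_n, J - B kills the
  all-ones vector and is a contraction, because (B - J) x is the mean-zero part of B x and B is a
  contraction by Jensen's inequality on its rows. So J - B has a zero singular value and all
  others are at most 1, whence \<parallel>J - B\<parallel>^p \<le> n - 1.
  Conversely, for D \<in> \<Omega>_n, averaging diagonal sums over the cyclic shifts of a permutation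
  yields \<sigma> with \<Sum>_i D(i,\<sigma> i) \<le> 1, strictly unless D = J. For the permutation matrix P of \<sigma>,
  D - P also has a zero singular value, and its nuclear norm is at least
  \<langle>P, P - D\<rangle> = n - \<Sum>_i D(i,\<sigma> i). Bernoulli's inequality s^p \<ge> 1 + p (s - 1) at the
  other n - 1 singular values gives \<parallel>D - P\<parallel>^p \<ge> n - 1 + p (1 - \<Sum>_i D(i,\<sigma> i)).
  Singular values are computed from an orthonormal eigenbasis of A^T A, which the spectral
  theorem for real symmetric matrices provides.\<close>

section \<open>Spectral theorem for real symmetric matrices\<close>

lemma char_poly_root_eigenvector:
  fixes A :: "'a::field mat"
  assumes A: "A \<in> carrier_mat n n" and root: "poly (char_poly A) k = 0"
  obtains v where "v \<in> carrier_vec n" "v \<noteq> 0\<^sub>v n" "A *\<^sub>v v = k \<cdot>\<^sub>v v"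
  using root A eigenvalue_root_char_poly[OF A] unfolding eigenvalue_def eigenvector_def by auto

lemma symmetric_mat_eigenvalue_real:
  fixes N :: "real mat" and a :: complex
  assumes N: "N \<in> carrier_mat n n" and sym: "N\<^sup>T = N"
    and root: "poly (char_poly (map_mat complex_of_real N)) a = 0"
  shows "Im a = 0"
proof -
  let ?N = "map_mat complex_of_real N"
  have Nc: "?N \<in> carrier_mat n n" using N by simp
  obtain v where v: "v \<in> carrier_vec n" "v \<noteq> 0\<^sub>v n" and ev: "?N *\<^sub>v v = a \<cdot>\<^sub>v v"
    using char_poly_root_eigenvector[OF Nc root] by blast
  have cv: "conjugate v \<in> carrier_vec n" using v by simp
  have symc: "?N\<^sup>T = ?N" using sym by (simp add: map_mat_transpose)
  have real: "?N *\<^sub>v conjugate v = conjugate (?N *\<^sub>v v)"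
    using N v by (intro eq_vecI) (auto simp: scalar_prod_def cnj_sum)
  have "a * (conjugate v \<bullet> v) = conjugate v \<bullet> (?N *\<^sub>v v)"
    using ev v cv by simp
  also have "\<dots> = (?N\<^sup>T *\<^sub>v conjugate v) \<bullet> v"
    using transpose_vec_mult_scalar[OF Nc v(1) cv] by simp
  also have "\<dots> = (cnj a \<cdot>\<^sub>v conjugate v) \<bullet> v"
    unfolding symc real ev by (simp add: conjugate_smult_vec)
  also have "\<dots> = cnj a * (conjugate v \<bullet> v)"
    using v cv by simp
  finally have "a * (conjugate v \<bullet> v) = cnj a * (conjugate v \<bullet> v)" .
  moreover have "conjugate v \<bullet> v \<noteq> 0"
    using v conjugate_square_eq_0_vec[OF v(1)] conjugate_vec_sprod_comm[OF v(1) v(1)] by auto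
  ultimately have "cnj a = a" by simp
  then show ?thesis by (metis Reals_cnj_iff complex_is_Real_iff)
qed

lemma symmetric_mat_char_poly_splits:
  fixes N :: "real mat"
  assumes N: "N \<in> carrier_mat n n" and sym: "N\<^sup>T = N"
  obtains rs where "char_poly N = (\<Prod>r\<leftarrow>rs. [:-r, 1:])"
proof -
  let ?N = "map_mat complex_of_real N"
  obtain as where as: "char_poly ?N = (\<Prod>a\<leftarrow>as. [:-a, 1:])"
    using char_poly_factorized[of ?N n] N by auto
  have real: "a = complex_of_real (Re a)" if "a \<in> set as" for a
  proof -
    have "poly (char_poly ?N) a = 0"
      unfolding as using that by (auto simp: poly_prod_list prod_list_zero_iff)
    then show ?thesis using symmetric_mat_eigenvalue_real[OF N sym] by (simp add: complex_eq_iff)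
  qed
  interpret of_real_poly: map_poly_inj_comm_ring_hom complex_of_real ..
  have "map_poly complex_of_real (char_poly N) = char_poly ?N"
    by (rule of_real_hom.char_poly_hom[OF N, symmetric])
  also have "\<dots> = (\<Prod>a\<leftarrow>as. [:-a, 1:])" by (rule as)
  also have "\<dots> = (\<Prod>r\<leftarrow>map Re as. [:-complex_of_real r, 1:])"
    using real by (induct as) auto
  also have "\<dots> = map_poly complex_of_real (\<Prod>r\<leftarrow>map Re as. [:-r, 1:])"
    by (simp add: of_real_poly.hom_prod_list o_def)
  finally show ?thesis by (intro that[of "map Re as"]) (simp add: o_def)
qed

definition trace :: "'a::comm_ring_1 mat \<Rightarrow> 'a" where
  "trace A = (\<Sum>i<dim_row A. A $$ (i, i))"

lemma trace_mult:
  fixes X Y :: "'a::comm_ring_1 mat"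
  assumes "X \<in> carrier_mat n n" and "Y \<in> carrier_mat n n"
  shows "trace (X * Y) = (\<Sum>i<n. \<Sum>j<n. X $$ (i, j) * Y $$ (j, i))"
  unfolding trace_def using assms by (simp add: scalar_prod_def atLeast0LessThan)

lemma trace_mult_comm:
  fixes X Y :: "'a::comm_ring_1 mat"
  assumes X: "X \<in> carrier_mat n n" and Y: "Y \<in> carrier_mat n n"
  shows "trace (X * Y) = trace (Y * X)"
  unfolding trace_mult[OF X Y] trace_mult[OF Y X]
  by (subst sum.swap) (simp add: mult.commute)

lemma trace_similar:
  fixes A B :: "'a::comm_ring_1 mat"
  assumes "similar_mat A B"
  shows "trace A = trace B"
proof -
  obtain n P Q where PQ: "{A, B, P, Q} \<subseteq> carrier_mat n n" "Q * P = 1\<^sub>m n" "A = P * B * Q"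
    using similar_matD[OF assms] by blast
  then have "trace A = trace (Q * (P * B))"
    using trace_mult_comm[of "P * B" n Q] by auto
  also have "Q * (P * B) = (Q * P) * B"
    by (rule assoc_mult_mat[symmetric]) (use PQ in auto)
  finally show ?thesis using PQ by auto
qed

lemma trace_square_upper_triangular:
  fixes B :: "'a::comm_ring_1 mat"
  assumes B: "B \<in> carrier_mat n n" and ut: "upper_triangular B"
  shows "trace (B * B) = (\<Sum>i<n. B $$ (i, i) * B $$ (i, i))"
proof -
  have "(\<Sum>j<n. B $$ (i, j) * B $$ (j, i)) = (\<Sum>j<n. if j = i then B $$ (i, i) * B $$ (i, i) else 0)"
    if "i < n" for i
    by (rule sum.cong) (use ut B that in \<open>auto simp: upper_triangular_def nat_neq_iff\<close>)
  then show ?thesis unfolding trace_mult[OF B B] by (intro sum.cong) auto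
qed

lemma trace_square_symmetric:
  fixes N :: "'a::comm_ring_1 mat"
  assumes N: "N \<in> carrier_mat n n" and sym: "N\<^sup>T = N"
  shows "trace (N * N) = (\<Sum>i<n. \<Sum>j<n. N $$ (i, j) * N $$ (i, j))"
  unfolding trace_mult[OF N N]
proof (intro sum.cong refl)
  fix i j assume "i \<in> {..<n}" "j \<in> {..<n}"
  then have "N $$ (j, i) = N $$ (i, j)" using N sym by (metis carrier_matD index_transpose_mat(1) lessThan_iff)
  then show "N $$ (i, j) * N $$ (j, i) = N $$ (i, j) * N $$ (i, j)" by simp
qed

text \<open>If all eigenvalues vanished, the Schur form would have zero diagonal, so the trace of the
  square, which for a symmetric matrix is the squared Frobenius norm, would be zero.\<close>

lemma symmetric_mat_nonzero_eigenvalue: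
  fixes N :: "real mat"
  assumes N: "N \<in> carrier_mat n n" and sym: "N\<^sup>T = N" and nz: "N \<noteq> 0\<^sub>m n n"
  obtains \<mu> v where "\<mu> \<noteq> 0" "v \<in> carrier_vec n" "v \<noteq> 0\<^sub>v n" "N *\<^sub>v v = \<mu> \<cdot>\<^sub>v v"
proof -
  obtain rs where "char_poly N = (\<Prod>r\<leftarrow>rs. [:-r, 1:])"
    using symmetric_mat_char_poly_splits[OF N sym] .
  then obtain B where B: "B \<in> carrier_mat n n" "upper_triangular B" "similar_mat N B"
    using schur_decomposition_exists[OF N] by blast
  have cp: "char_poly N = (\<Prod>a\<leftarrow>diag_mat B. [:-a, 1:])"
    using char_poly_similar[OF B(3)] char_poly_upper_triangular[OF B(1,2)] by simp
  show ?thesis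
  proof (cases "\<exists>k<n. B $$ (k, k) \<noteq> 0")
    case True
    then obtain k where k: "k < n" "B $$ (k, k) \<noteq> 0" by blast
    have "poly (char_poly N) (B $$ (k, k)) = 0"
      unfolding cp using k B(1) by (auto simp: poly_prod_list prod_list_zero_iff diag_mat_def)
    with k(2) show ?thesis using char_poly_root_eigenvector[OF N] that by metis
  next
    case False
    obtain P Q where "similar_mat_wit N B P Q" using B(3) unfolding similar_mat_def by blast
    then have "similar_mat (N ^\<^sub>m 2) (B ^\<^sub>m 2)"
      unfolding similar_mat_def by (blast intro: similar_mat_wit_pow)
    then have "trace (N * N) = trace (B * B)"
      using trace_similar N B(1) by (simp add: numeral_2_eq_2)
    also have "\<dots> = 0" using trace_square_upper_triangular[OF B(1,2)] False by simp
    finally have "(\<Sum>i<n. \<Sum>j<n. N $$ (i, j) * N $$ (i, j)) = 0"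
      using trace_square_symmetric[OF N sym] by simp
    then have "\<forall>i<n. \<forall>j<n. N $$ (i, j) * N $$ (i, j) = 0"
      by (simp add: sum_nonneg_eq_0_iff sum_nonneg)
    then have "N = 0\<^sub>m n n" using N by (intro eq_matI) auto
    with nz show ?thesis by contradiction
  qed
qed

definition orthonormal :: "nat \<Rightarrow> real vec list \<Rightarrow> bool" where
  "orthonormal n ws \<longleftrightarrow> set ws \<subseteq> carrier_vec n \<and>
     (\<forall>i<length ws. \<forall>j<length ws. ws ! i \<bullet> ws ! j = (if i = j then 1 else 0))"

lemma orthonormal_carrier: "orthonormal n ws \<Longrightarrow> i < length ws \<Longrightarrow> ws ! i \<in> carrier_vec n"
  unfolding orthonormal_def by auto

lemma orthonormal_dim: "orthonormal n ws \<Longrightarrow> i < length ws \<Longrightarrow> dim_vec (ws ! i) = n"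
  using orthonormal_carrier by (metis carrier_vecD)

lemma orthonormal_scalar_prod:
  "orthonormal n ws \<Longrightarrow> i < length ws \<Longrightarrow> j < length ws \<Longrightarrow>
    ws ! i \<bullet> ws ! j = (if i = j then 1 else 0)"
  unfolding orthonormal_def by auto

definition orth_compl_proj :: "nat \<Rightarrow> real vec list \<Rightarrow> real mat" where
  "orth_compl_proj n ws = 1\<^sub>m n - mat n n (\<lambda>(a, b). \<Sum>i<length ws. ws ! i $ a * ws ! i $ b)"

lemma orth_compl_proj_carrier [simp]: "orth_compl_proj n ws \<in> carrier_mat n n"
  unfolding orth_compl_proj_def by (rule minus_carrier_mat) simp

lemma orth_compl_proj_dim [simp]: "dim_row (orth_compl_proj n ws) = n" "dim_col (orth_compl_proj n ws) = n"
  unfolding orth_compl_proj_def by simp_all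

lemma orth_compl_proj_symmetric: "(orth_compl_proj n ws)\<^sup>T = orth_compl_proj n ws"
  unfolding orth_compl_proj_def by (rule eq_matI) (auto simp: mult.commute)

lemma orth_compl_proj_mult_vec:
  assumes x: "x \<in> carrier_vec n" and a: "a < n"
  shows "(orth_compl_proj n ws *\<^sub>v x) $ a = x $ a - (\<Sum>i<length ws. (ws ! i \<bullet> x) * ws ! i $ a)"
proof -
  let ?Q = "mat n n (\<lambda>(a, b). \<Sum>i<length ws. ws ! i $ a * ws ! i $ b)"
  have "(orth_compl_proj n ws *\<^sub>v x) $ a = x $ a - (?Q *\<^sub>v x) $ a"
    unfolding orth_compl_proj_def using x a
    by (subst minus_mult_distrib_mat_vec[of _ n n]) auto
  also have "(?Q *\<^sub>v x) $ a = (\<Sum>b<n. \<Sum>i<length ws. ws ! i $ a * (ws ! i $ b * x $ b))"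
    using x a by (simp add: scalar_prod_def atLeast0LessThan sum_distrib_right mult.assoc)
  also have "\<dots> = (\<Sum>i<length ws. (ws ! i \<bullet> x) * ws ! i $ a)"
    using x by (subst sum.swap) (simp add: scalar_prod_def atLeast0LessThan sum_distrib_left mult.commute)
  finally show ?thesis .
qed

lemma orth_compl_proj_orthogonal:
  assumes ws: "orthonormal n ws" and x: "x \<in> carrier_vec n" and j: "j < length ws"
  shows "ws ! j \<bullet> (orth_compl_proj n ws *\<^sub>v x) = 0"
proof -
  have wj: "ws ! j \<in> carrier_vec n" using orthonormal_carrier[OF ws j] .
  have "ws ! j \<bullet> (orth_compl_proj n ws *\<^sub>v x)
      = (\<Sum>a<n. ws ! j $ a * (x $ a - (\<Sum>i<length ws. (ws ! i \<bullet> x) * ws ! i $ a)))"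
    using x by (simp add: scalar_prod_def atLeast0LessThan orth_compl_proj_mult_vec del: index_mult_mat_vec)
  also have "\<dots> = ws ! j \<bullet> x - (\<Sum>a<n. \<Sum>i<length ws. (ws ! i \<bullet> x) * (ws ! j $ a * ws ! i $ a))"
    using x by (simp add: scalar_prod_def atLeast0LessThan right_diff_distrib sum_subtractf
        sum_distrib_left mult_ac)
  also have "(\<Sum>a<n. \<Sum>i<length ws. (ws ! i \<bullet> x) * (ws ! j $ a * ws ! i $ a))
      = (\<Sum>i<length ws. (ws ! i \<bullet> x) * (ws ! j \<bullet> ws ! i))"
    by (subst sum.swap) (simp add: scalar_prod_def atLeast0LessThan sum_distrib_left orthonormal_dim[OF ws])
  also have "\<dots> = (\<Sum>i<length ws. if i = j then ws ! i \<bullet> x else 0)"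
    using orthonormal_scalar_prod[OF ws j] by (intro sum.cong) auto
  finally show ?thesis using j by simp
qed

lemma orth_compl_proj_fixes_orthogonal:
  assumes x: "x \<in> carrier_vec n" and orth: "\<And>j. j < length ws \<Longrightarrow> ws ! j \<bullet> x = 0"
  shows "orth_compl_proj n ws *\<^sub>v x = x"
proof (rule eq_vecI)
  show "(orth_compl_proj n ws *\<^sub>v x) $ a = x $ a" if "a < dim_vec x" for a
    using that x by (subst orth_compl_proj_mult_vec[OF x]) (auto simp: orth)
qed (use x in simp)

lemma trace_orth_compl_proj:
  assumes ws: "orthonormal n ws"
  shows "trace (orth_compl_proj n ws) = real n - real (length ws)"
proof -
  have "trace (orth_compl_proj n ws) = (\<Sum>a<n. 1 - (\<Sum>i<length ws. ws ! i $ a * ws ! i $ a))"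
    unfolding trace_def orth_compl_proj_def by (intro sum.cong) auto
  also have "\<dots> = real n - (\<Sum>i<length ws. \<Sum>a<n. ws ! i $ a * ws ! i $ a)"
    by (subst sum.swap) (simp add: sum_subtractf)
  also have "(\<Sum>i<length ws. \<Sum>a<n. ws ! i $ a * ws ! i $ a) = (\<Sum>i<length ws. ws ! i \<bullet> ws ! i)"
    by (intro sum.cong refl) (simp add: scalar_prod_def atLeast0LessThan orthonormal_dim[OF ws])
  also have "\<dots> = real (length ws)" using orthonormal_scalar_prod[OF ws] by simp
  finally show ?thesis .
qed

lemma orth_compl_proj_unit_vec_nonzero:
  assumes ws: "orthonormal n ws" and len: "length ws < n"
  obtains a where "a < n" "orth_compl_proj n ws *\<^sub>v unit_vec n a \<noteq> 0\<^sub>v n"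
proof -
  have "\<exists>a<n. orth_compl_proj n ws $$ (a, a) \<noteq> 0"
  proof (rule ccontr)
    assume "\<not> ?thesis"
    then have "trace (orth_compl_proj n ws) = 0" unfolding trace_def by simp
    then show False using trace_orth_compl_proj[OF ws] len by simp
  qed
  then obtain a where a: "a < n" "orth_compl_proj n ws $$ (a, a) \<noteq> 0" by blast
  have "(orth_compl_proj n ws *\<^sub>v unit_vec n a) $ a \<noteq> 0" using a by simp
  then show ?thesis using that[OF a(1)] a(1) by (metis index_zero_vec(1))
qed

lemma symmetric_mat_orthogonal_to_eigenvector:
  fixes M :: "real mat"
  assumes M: "M \<in> carrier_mat n n" and sym: "M\<^sup>T = M"
    and w: "w \<in> carrier_vec n" "M *\<^sub>v w = l \<cdot>\<^sub>v w" and x: "x \<in> carrier_vec n" "w \<bullet> x = 0"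
  shows "w \<bullet> (M *\<^sub>v x) = 0"
proof -
  have "w \<bullet> (M *\<^sub>v x) = (M\<^sup>T *\<^sub>v w) \<bullet> x"
    using transpose_vec_mult_scalar[OF M x(1) w(1)] by simp
  also have "\<dots> = l * (w \<bullet> x)" using sym w x(1) by simp
  finally show ?thesis using x(2) by simp
qed

text \<open>The complement of the span of the eigenvectors ws is invariant under M, and there M agrees
  with the symmetric matrix P * M * P, where P projects onto the complement. Eigenvectors of
  P * M * P for nonzero eigenvalues lie in the complement; if P * M * P = 0, then M vanishes on
  the complement, which is nonzero as the trace of P is positive.\<close>

lemma symmetric_mat_eigenvector_orth_compl:
  fixes M :: "real mat"
  assumes M: "M \<in> carrier_mat n n" and sym: "M\<^sup>T = M"
    and ws: "orthonormal n ws" and eig: "\<And>j. j < length ws \<Longrightarrow> \<exists>l. M *\<^sub>v ws ! j = l \<cdot>\<^sub>v ws ! j"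
    and len: "length ws < n"
  obtains v \<mu> where "v \<in> carrier_vec n" "v \<noteq> 0\<^sub>v n"
    "\<And>j. j < length ws \<Longrightarrow> ws ! j \<bullet> v = 0" "M *\<^sub>v v = \<mu> \<cdot>\<^sub>v v"
proof -
  define P where "P = orth_compl_proj n ws"
  define N where "N = P * M * P"
  have P: "P \<in> carrier_mat n n" unfolding P_def by simp
  have N: "N \<in> carrier_mat n n" unfolding N_def using P M by simp
  have Nsym: "N\<^sup>T = N"
    unfolding N_def using P M sym orth_compl_proj_symmetric[of n ws, folded P_def]
    by (simp add: transpose_mult[of _ n n _ n] assoc_mult_mat[of _ n n _ n _ n])
  have Nv: "N *\<^sub>v x = P *\<^sub>v (M *\<^sub>v (P *\<^sub>v x))" if "x \<in> carrier_vec n" for x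
    unfolding N_def using P M that by (simp add: assoc_mult_mat_vec[of _ n n _ n])
  have Porth: "ws ! j \<bullet> (P *\<^sub>v x) = 0" if "x \<in> carrier_vec n" "j < length ws" for x j
    unfolding P_def using orth_compl_proj_orthogonal[OF ws that] .
  have Morth: "ws ! j \<bullet> (M *\<^sub>v x) = 0"
    if "x \<in> carrier_vec n" "\<And>j. j < length ws \<Longrightarrow> ws ! j \<bullet> x = 0" and j: "j < length ws" for x j
    using eig[OF j] symmetric_mat_orthogonal_to_eigenvector[OF M sym orthonormal_carrier[OF ws j]] that
    by blast
  have NM: "N *\<^sub>v x = M *\<^sub>v x" if "x \<in> carrier_vec n" "\<And>j. j < length ws \<Longrightarrow> ws ! j \<bullet> x = 0" for x
    using that M Nv unfolding P_def by (simp add: orth_compl_proj_fixes_orthogonal Morth)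
  show ?thesis
  proof (cases "N = 0\<^sub>m n n")
    case False
    obtain \<mu> v where \<mu>: "\<mu> \<noteq> 0" and v: "v \<in> carrier_vec n" "v \<noteq> 0\<^sub>v n" and ev: "N *\<^sub>v v = \<mu> \<cdot>\<^sub>v v"
      using symmetric_mat_nonzero_eigenvalue[OF N Nsym False] by blast
    have orth: "ws ! j \<bullet> v = 0" if j: "j < length ws" for j
    proof -
      have "\<mu> * (ws ! j \<bullet> v) = ws ! j \<bullet> (N *\<^sub>v v)"
        using ev v orthonormal_carrier[OF ws j] by simp
      also have "\<dots> = 0" using Nv[OF v(1)] Porth[OF _ j] M P v(1) by simp
      finally show ?thesis using \<mu> by simp
    qed
    show ?thesis using that[OF v orth, of \<mu>] NM[OF v(1) orth] ev by simp
  next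
    case True
    obtain a where a: "a < n" "P *\<^sub>v unit_vec n a \<noteq> 0\<^sub>v n"
      using orth_compl_proj_unit_vec_nonzero[OF ws len] unfolding P_def by blast
    define u where "u = P *\<^sub>v unit_vec n a"
    have u: "u \<in> carrier_vec n" unfolding u_def using P by simp
    have orth: "ws ! j \<bullet> u = 0" if "j < length ws" for j
      unfolding u_def using Porth[OF _ that] by simp
    have "M *\<^sub>v u = P *\<^sub>v (M *\<^sub>v u)"
      unfolding P_def by (rule orth_compl_proj_fixes_orthogonal[symmetric]) (use M u Morth[OF u orth] in auto)
    also have "\<dots> = N *\<^sub>v unit_vec n a" unfolding u_def by (simp add: Nv)
    also have "\<dots> = 0 \<cdot>\<^sub>v u" using True u by (intro eq_vecI) auto
    finally show ?thesis using that[OF u a(2)[folded u_def] orth] by blast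
  qed
qed

lemma symmetric_mat_orthogonal_eigenvector:
  fixes M :: "real mat"
  assumes M: "M \<in> carrier_mat n n" and sym: "M\<^sup>T = M"
    and ws: "orthonormal n ws" and eig: "\<And>j. j < length ws \<Longrightarrow> \<exists>l. M *\<^sub>v ws ! j = l \<cdot>\<^sub>v ws ! j"
    and len: "length ws < n"
  obtains u \<mu> where "u \<in> carrier_vec n" "u \<bullet> u = 1"
    "\<And>j. j < length ws \<Longrightarrow> ws ! j \<bullet> u = 0" "M *\<^sub>v u = \<mu> \<cdot>\<^sub>v u"
proof -
  obtain v \<mu> where v: "v \<in> carrier_vec n" "v \<noteq> 0\<^sub>v n" "\<And>j. j < length ws \<Longrightarrow> ws ! j \<bullet> v = 0"
    and ev: "M *\<^sub>v v = \<mu> \<cdot>\<^sub>v v"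
    using symmetric_mat_eigenvector_orth_compl[OF M sym ws eig len] by blast
  have pos: "0 < v \<bullet> v" using conjugate_square_greater_0_vec[OF v(1)] v(2) by simp
  define u where "u = (1 / sqrt (v \<bullet> v)) \<cdot>\<^sub>v v"
  show ?thesis
  proof (rule that[of u \<mu>])
    show "u \<in> carrier_vec n" unfolding u_def using v by simp
    show "u \<bullet> u = 1" unfolding u_def using v(1) pos by simp
    show "ws ! j \<bullet> u = 0" if "j < length ws" for j
      unfolding u_def using v orthonormal_carrier[OF ws that] that by simp
    show "M *\<^sub>v u = \<mu> \<cdot>\<^sub>v u"
      unfolding u_def using v(1) M ev by (simp add: mult_mat_vec smult_smult_assoc mult.commute)
  qed
qed

lemma orthonormal_snoc:
  assumes ws: "orthonormal n ws" and u: "u \<in> carrier_vec n" "u \<bullet> u = 1"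
    and orth: "\<And>j. j < length ws \<Longrightarrow> ws ! j \<bullet> u = 0"
  shows "orthonormal n (ws @ [u])"
proof -
  have "u \<bullet> ws ! j = 0" if "j < length ws" for j
    using orth[OF that] comm_scalar_prod[OF u(1) orthonormal_carrier[OF ws that]] by simp
  then show ?thesis
    using ws u orth unfolding orthonormal_def
    by (auto simp: nth_append less_Suc_eq)
qed

lemma symmetric_mat_orthonormal_eigenvectors:
  fixes M :: "real mat"
  assumes M: "M \<in> carrier_mat n n" and sym: "M\<^sup>T = M" and k: "k \<le> n"
  obtains ws ls where "orthonormal n ws" "length ws = k" "length ls = k"
    "\<And>i. i < k \<Longrightarrow> M *\<^sub>v ws ! i = ls ! i \<cdot>\<^sub>v ws ! i"
  using k
proof (induct k arbitrary: thesis)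
  case 0
  show ?case by (rule 0(1)[of "[]" "[]"]) (auto simp: orthonormal_def)
next
  case (Suc k)
  obtain ws ls where ws: "orthonormal n ws" "length ws = k" "length ls = k"
    and eig: "\<And>i. i < k \<Longrightarrow> M *\<^sub>v ws ! i = ls ! i \<cdot>\<^sub>v ws ! i"
    using Suc(1) Suc(3) by (metis Suc_leD)
  obtain u \<mu> where u: "u \<in> carrier_vec n" "u \<bullet> u = 1" "\<And>j. j < length ws \<Longrightarrow> ws ! j \<bullet> u = 0"
    and eig_u: "M *\<^sub>v u = \<mu> \<cdot>\<^sub>v u"
  proof (rule symmetric_mat_orthogonal_eigenvector[OF M sym ws(1)])
    show "\<exists>l. M *\<^sub>v ws ! j = l \<cdot>\<^sub>v ws ! j" if "j < length ws" for j
      using eig that ws(2) by blast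
    show "length ws < n" using ws(2) Suc(3) by simp
  qed blast
  show ?case
  proof (rule Suc(2)[of "ws @ [u]" "ls @ [\<mu>]"])
    show "orthonormal n (ws @ [u])" by (rule orthonormal_snoc[OF ws(1) u])
    show "M *\<^sub>v (ws @ [u]) ! i = (ls @ [\<mu>]) ! i \<cdot>\<^sub>v (ws @ [u]) ! i" if "i < Suc k" for i
      using that ws eig eig_u by (cases "i < k") (auto simp: nth_append less_Suc_eq)
  qed (use ws in auto)
qed

lemma orthonormal_mat_of_cols:
  assumes ws: "orthonormal n ws" and len: "length ws = n"
  shows "(mat_of_cols n ws)\<^sup>T * mat_of_cols n ws = 1\<^sub>m n"
    and "mat_of_cols n ws * (mat_of_cols n ws)\<^sup>T = 1\<^sub>m n"
proof -
  let ?W = "mat_of_cols n ws"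
  have W: "?W \<in> carrier_mat n n" using mat_of_cols_carrier(1)[of n ws] len by simp
  show WTW: "?W\<^sup>T * ?W = 1\<^sub>m n"
  proof (rule eq_matI)
    fix i j assume "i < dim_row (1\<^sub>m n)" "j < dim_col (1\<^sub>m n)"
    then have i: "i < n" and j: "j < n" by auto
    then show "(?W\<^sup>T * ?W) $$ (i, j) = 1\<^sub>m n $$ (i, j)"
      using len orthonormal_carrier[OF ws] orthonormal_scalar_prod[OF ws] by simp
  qed (use W in auto)
  show "?W * ?W\<^sup>T = 1\<^sub>m n"
    by (rule mat_mult_left_right_inverse[OF _ W WTW]) (use W in simp)
qed

lemma proots_prod_linear_factors: "proots (\<Prod>a\<leftarrow>as. [:-a, 1:]) = mset (as :: 'a::idom list)"
proof (induct as)
  case (Cons a as)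
  have "proots (\<Prod>b\<leftarrow>a # as. [:-b, 1:]) = proots [:-a, 1:] + proots (\<Prod>b\<leftarrow>as. [:-b, 1:])"
    unfolding list.map prod_list.Cons by (rule proots_mult) (auto simp: prod_list_zero_iff)
  then show ?case using Cons by simp
qed simp

lemma mult_mat_of_cols_eigenvectors:
  fixes M :: "'a::comm_ring_1 mat"
  assumes M: "M \<in> carrier_mat n n" and ws: "set ws \<subseteq> carrier_vec n" "length ws = n"
    and eig: "\<And>i. i < n \<Longrightarrow> M *\<^sub>v ws ! i = ls ! i \<cdot>\<^sub>v ws ! i"
  shows "M * mat_of_cols n ws = mat_of_cols n ws * mat_diag n (\<lambda>i. ls ! i)"
proof -
  have W: "mat_of_cols n ws \<in> carrier_mat n n" using mat_of_cols_carrier(1)[of n ws] ws(2) by simp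
  show ?thesis
    unfolding mat_diag_mult_right[OF W]
  proof (rule eq_matI)
    fix a j assume "a < dim_row (mat n n (\<lambda>(i, j). mat_of_cols n ws $$ (i, j) * ls ! j))"
      "j < dim_col (mat n n (\<lambda>(i, j). mat_of_cols n ws $$ (i, j) * ls ! j))"
    then have a: "a < n" and j: "j < n" by auto
    have wj: "ws ! j \<in> carrier_vec n" using ws j by auto
    have "(M * mat_of_cols n ws) $$ (a, j) = (M *\<^sub>v ws ! j) $ a"
      using a j M W wj ws(2) by simp
    also have "\<dots> = ws ! j $ a * ls ! j" using eig[OF j] a wj by (simp add: mult.commute)
    finally show "(M * mat_of_cols n ws) $$ (a, j) = mat n n (\<lambda>(i, j). mat_of_cols n ws $$ (i, j) * ls ! j) $$ (a, j)"
      using a j ws(2) by (simp add: mat_of_cols_index)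
  qed (use M W in auto)
qed

theorem symmetric_mat_spectral:
  fixes M :: "real mat"
  assumes M: "M \<in> carrier_mat n n" and sym: "M\<^sup>T = M"
  obtains ws ls where "orthonormal n ws" "length ws = n" "length ls = n"
    "\<And>i. i < n \<Longrightarrow> M *\<^sub>v ws ! i = ls ! i \<cdot>\<^sub>v ws ! i" "proots (char_poly M) = mset ls"
proof -
  obtain ws ls where ws: "orthonormal n ws" "length ws = n" "length ls = n"
    and eig: "\<And>i. i < n \<Longrightarrow> M *\<^sub>v ws ! i = ls ! i \<cdot>\<^sub>v ws ! i"
    using symmetric_mat_orthonormal_eigenvectors[OF M sym order_refl] by blast
  define W where "W = mat_of_cols n ws"
  define L where "L = mat_diag n (\<lambda>i. ls ! i)"
  have W: "W \<in> carrier_mat n n" and WT: "W\<^sup>T \<in> carrier_mat n n" and L: "L \<in> carrier_mat n n"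
    unfolding W_def L_def using mat_of_cols_carrier(1)[of n ws] ws(2) by auto
  have WWT: "W * W\<^sup>T = 1\<^sub>m n" and WTW: "W\<^sup>T * W = 1\<^sub>m n"
    unfolding W_def using orthonormal_mat_of_cols[OF ws(1,2)] by auto
  have MW: "M * W = W * L"
    unfolding W_def L_def using ws(1)
    by (intro mult_mat_of_cols_eigenvectors[OF M _ ws(2) eig]) (simp add: orthonormal_def)
  have "M = M * (W * W\<^sup>T)" using WWT M by simp
  also have "\<dots> = W * L * W\<^sup>T"
    using M W WT MW by (simp add: assoc_mult_mat[of M n n W n "W\<^sup>T" n, symmetric])
  finally have "similar_mat M L"
    using M L W WT WWT WTW by (intro similar_matI[of M L W "W\<^sup>T" n]) auto
  moreover have "upper_triangular L" unfolding L_def mat_diag_def upper_triangular_def by auto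
  moreover have "diag_mat L = ls" unfolding diag_mat_def L_def mat_diag_def using ws(3)
    by (intro nth_equalityI) auto
  ultimately have "char_poly M = (\<Prod>l\<leftarrow>ls. [:-l, 1:])"
    using char_poly_similar char_poly_upper_triangular[OF L] by metis
  then have "proots (char_poly M) = mset ls" by (simp add: proots_prod_linear_factors)
  with ws eig show ?thesis using that by blast
qed

lemma orthonormal_basis_parseval:
  assumes ws: "orthonormal n ws" "length ws = n" and u: "u \<in> carrier_vec n" and v: "v \<in> carrier_vec n"
  shows "(\<Sum>i<n. (ws ! i \<bullet> u) * (ws ! i \<bullet> v)) = u \<bullet> v"
proof -
  let ?W = "mat_of_cols n ws"
  have W: "?W \<in> carrier_mat n n" using mat_of_cols_carrier(1)[of n ws] ws(2) by simp
  have coeff: "(?W\<^sup>T *\<^sub>v x) $ i = ws ! i \<bullet> x" if "i < n" for x i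
    using that ws orthonormal_carrier[OF ws(1)] by simp
  have "(\<Sum>i<n. (ws ! i \<bullet> u) * (ws ! i \<bullet> v)) = (?W\<^sup>T *\<^sub>v u) \<bullet> (?W\<^sup>T *\<^sub>v v)"
    using ws(2) by (auto simp: scalar_prod_def[of "?W\<^sup>T *\<^sub>v u"] atLeast0LessThan coeff
        simp del: index_mult_mat_vec intro!: sum.cong)
  also have "\<dots> = u \<bullet> (?W *\<^sub>v (?W\<^sup>T *\<^sub>v v))"
    using transpose_vec_mult_scalar[OF W _ u, of "?W\<^sup>T *\<^sub>v v"] W v by simp
  also have "?W *\<^sub>v (?W\<^sup>T *\<^sub>v v) = (?W * ?W\<^sup>T) *\<^sub>v v"
    using W v by simp
  also have "\<dots> = v" using orthonormal_mat_of_cols(2)[OF ws] v by simp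
  finally show ?thesis .
qed

lemma orthonormal_basis_sum_scalar_prod:
  assumes ws: "orthonormal n ws" "length ws = n"
    and X: "X \<in> carrier_mat n n" and Y: "Y \<in> carrier_mat n n"
  shows "(\<Sum>i<n. (X *\<^sub>v ws ! i) \<bullet> (Y *\<^sub>v ws ! i)) = (\<Sum>a<n. \<Sum>b<n. X $$ (a, b) * Y $$ (a, b))"
proof -
  have wn: "ws ! i \<in> carrier_vec n" if "i < n" for i
    using orthonormal_carrier[OF ws(1)] ws(2) that by simp
  have "(\<Sum>i<n. (X *\<^sub>v ws ! i) \<bullet> (Y *\<^sub>v ws ! i))
      = (\<Sum>i<n. \<Sum>a<n. (ws ! i \<bullet> row X a) * (ws ! i \<bullet> row Y a))"
    using X Y wn by (intro sum.cong refl)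
      (simp add: scalar_prod_def[of "X *\<^sub>v _"] atLeast0LessThan comm_scalar_prod[of _ n])
  also have "\<dots> = (\<Sum>a<n. row X a \<bullet> row Y a)"
    using X Y by (subst sum.swap) (simp add: orthonormal_basis_parseval[OF ws])
  also have "\<dots> = (\<Sum>a<n. \<Sum>b<n. X $$ (a, b) * Y $$ (a, b))"
    using X Y by (simp add: scalar_prod_def atLeast0LessThan)
  finally show ?thesis .
qed

definition vec_norm :: "real vec \<Rightarrow> real" where
  "vec_norm v = sqrt (v \<bullet> v)"

lemma scalar_prod_self_nonneg: "0 \<le> (v :: real vec) \<bullet> v"
  unfolding scalar_prod_def by (auto intro: sum_nonneg)

lemma vec_norm_nonneg: "0 \<le> vec_norm v"
  unfolding vec_norm_def using scalar_prod_self_nonneg[of v] by simp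

lemma vec_norm_square: "(vec_norm v)\<^sup>2 = v \<bullet> v"
  unfolding vec_norm_def using scalar_prod_self_nonneg[of v] by simp

lemma vec_norm_eq_0_iff: "v \<in> carrier_vec n \<Longrightarrow> vec_norm v = 0 \<longleftrightarrow> v = 0\<^sub>v n"
  unfolding vec_norm_def using conjugate_square_eq_0_vec[of v n] by simp

lemma vec_norm_le_scale:
  assumes c: "0 \<le> c" and le: "v \<bullet> v \<le> c\<^sup>2 * (x \<bullet> x)"
  shows "vec_norm v \<le> c * vec_norm x"
  unfolding vec_norm_def using real_sqrt_le_mono[OF le] c by (simp add: real_sqrt_mult)

lemma abs_scalar_prod_le_vec_norm:
  fixes v w :: "real vec"
  assumes v: "v \<in> carrier_vec n" and w: "w \<in> carrier_vec n"
  shows "\<bar>v \<bullet> w\<bar> \<le> vec_norm v * vec_norm w"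
proof -
  define x y where "x = vec_norm v" and "y = vec_norm w"
  have sq: "v \<bullet> v = x\<^sup>2" "w \<bullet> w = y\<^sup>2" unfolding x_def y_def by (simp_all add: vec_norm_square)
  have "0 \<le> (\<Sum>i<n. (y * v $ i + x * w $ i)\<^sup>2)" "0 \<le> (\<Sum>i<n. (y * v $ i - x * w $ i)\<^sup>2)"
    by (simp_all add: sum_nonneg)
  moreover have "(\<Sum>i<n. (y * v $ i + x * w $ i)\<^sup>2) = y\<^sup>2 * (v \<bullet> v) + 2 * x * y * (v \<bullet> w) + x\<^sup>2 * (w \<bullet> w)"
    "(\<Sum>i<n. (y * v $ i - x * w $ i)\<^sup>2) = y\<^sup>2 * (v \<bullet> v) - 2 * x * y * (v \<bullet> w) + x\<^sup>2 * (w \<bullet> w)"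
    using v w by (simp_all add: scalar_prod_def atLeast0LessThan power2_eq_square sum.distrib
        sum_subtractf sum_distrib_left algebra_simps)
  ultimately have "x * y * \<bar>v \<bullet> w\<bar> \<le> x * y * (x * y)"
    unfolding sq by (simp add: abs_if power2_eq_square algebra_simps)
  moreover have "x = 0 \<or> y = 0 \<Longrightarrow> v \<bullet> w = 0"
    using vec_norm_eq_0_iff[OF v] vec_norm_eq_0_iff[OF w] v w unfolding x_def y_def by auto
  moreover have "0 \<le> x" "0 \<le> y" unfolding x_def y_def by (simp_all add: vec_norm_nonneg)
  ultimately show ?thesis unfolding x_def[symmetric] y_def[symmetric]
    by (cases "x * y = 0") (auto simp: mult_le_cancel_left)
qed

lemma singular_values_eigenbasis:
  fixes A :: "real mat"
  assumes A: "A \<in> carrier_mat n n"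
  obtains ws where "orthonormal n ws" "length ws = n"
    "\<And>p. (\<Sum>s\<in>#singular_values A. s powr p) = (\<Sum>i<n. vec_norm (A *\<^sub>v ws ! i) powr p)"
    "\<And>x. x \<in> carrier_vec n \<Longrightarrow> x \<noteq> 0\<^sub>v n \<Longrightarrow> A *\<^sub>v x = 0\<^sub>v n \<Longrightarrow> \<exists>k<n. A *\<^sub>v ws ! k = 0\<^sub>v n"
proof -
  define M where "M = A\<^sup>T * A"
  have M: "M \<in> carrier_mat n n" using A by (simp add: M_def)
  have sym: "M\<^sup>T = M" unfolding M_def using transpose_mult[of "A\<^sup>T" n n A n] A by simp
  obtain ws ls where ws: "orthonormal n ws" "length ws = n" "length ls = n"
    and eig: "\<And>i. i < n \<Longrightarrow> M *\<^sub>v ws ! i = ls ! i \<cdot>\<^sub>v ws ! i"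
    and roots: "proots (char_poly M) = mset ls"
    using symmetric_mat_spectral[OF M sym] by blast
  have MA: "M *\<^sub>v x = A\<^sup>T *\<^sub>v (A *\<^sub>v x)" if "x \<in> carrier_vec n" for x
    unfolding M_def using A that by (simp add: assoc_mult_mat_vec[of _ n n _ n])
  have ls: "ls ! i = (A *\<^sub>v ws ! i) \<bullet> (A *\<^sub>v ws ! i)" if i: "i < n" for i
  proof -
    have w: "ws ! i \<in> carrier_vec n" using orthonormal_carrier[OF ws(1)] i ws(2) by simp
    have "ls ! i = (M *\<^sub>v ws ! i) \<bullet> ws ! i"
      using eig[OF i] w orthonormal_scalar_prod[OF ws(1)] i ws(2) by simp
    also have "\<dots> = (A *\<^sub>v ws ! i) \<bullet> (A *\<^sub>v ws ! i)"
      unfolding MA[OF w] by (rule transpose_vec_mult_scalar[OF A w]) (use A w in simp)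
    finally show ?thesis .
  qed
  show ?thesis
  proof (rule that[OF ws(1,2)])
    fix p :: real
    have "(\<Sum>s\<in>#singular_values A. s powr p) = (\<Sum>l\<leftarrow>ls. sqrt l powr p)"
      unfolding singular_values_def M_def[symmetric] roots
      by (simp add: sum_mset_sum_list[symmetric] image_mset.compositionality o_def)
    also have "\<dots> = (\<Sum>i<n. vec_norm (A *\<^sub>v ws ! i) powr p)"
      using ws(3) by (simp add: sum_list_sum_nth atLeast0LessThan ls vec_norm_def)
    finally show "(\<Sum>s\<in>#singular_values A. s powr p) = (\<Sum>i<n. vec_norm (A *\<^sub>v ws ! i) powr p)" .
  next
    fix x assume x: "x \<in> carrier_vec n" "x \<noteq> 0\<^sub>v n" "A *\<^sub>v x = 0\<^sub>v n"
    have "M *\<^sub>v x = 0 \<cdot>\<^sub>v x" using MA[OF x(1)] x A by (auto intro!: eq_vecI simp: scalar_prod_def)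
    then have "eigenvalue M 0" using x M unfolding eigenvalue_def eigenvector_def by auto
    then have "poly (char_poly M) 0 = 0" using eigenvalue_root_char_poly[OF M] by simp
    moreover have "char_poly M \<noteq> 0" using degree_monic_char_poly[OF M] by auto
    ultimately have "0 \<in> set ls" using roots set_count_proots by (metis mem_Collect_eq set_mset_mset)
    then obtain k where k: "k < n" "ls ! k = 0" using ws(3) by (metis in_set_conv_nth)
    then have "A *\<^sub>v ws ! k = 0\<^sub>v n"
      using ls[OF k(1)] conjugate_square_eq_0_vec[of "A *\<^sub>v ws ! k" n] A by (simp add: carrier_vecI)
    with k show "\<exists>k<n. A *\<^sub>v ws ! k = 0\<^sub>v n" by blast
  qed
qed

lemma Bernoulli_inequality_powr:
  fixes x p :: real
  assumes x: "0 \<le> x" and p: "1 \<le> p"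
  shows "1 + p * (x - 1) \<le> x powr p"
proof (cases "x = 0")
  case True
  then show ?thesis using p by simp
next
  case False
  with x have x0: "0 < x" by simp
  define f where "f t = t powr p - 1 - p * (t - 1)" for t :: real
  have df: "DERIV f t :> p * t powr (p - 1) - p" if "0 < t" for t
    unfolding f_def using that by (auto intro!: derivative_eq_intros)
  have "f 1 \<le> f x"
  proof (cases "x \<le> 1")
    case True
    show ?thesis
    proof (rule DERIV_nonpos_imp_nonincreasing[OF True])
      fix t assume t: "x \<le> t" "t \<le> 1"
      then have "t powr (p - 1) \<le> 1" using x0 p by (simp add: powr_le1)
      then show "\<exists>y. DERIV f t :> y \<and> y \<le> 0"
        using df[of t] t x0 p by (intro exI[of _ "p * t powr (p - 1) - p"]) (simp add: mult_left_le)
    qed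
  next
    case False
    show ?thesis
    proof (rule DERIV_nonneg_imp_nondecreasing[of 1 x f])
      show "1 \<le> x" using False by simp
      fix t assume t: "1 \<le> t" "t \<le> x"
      then have "1 \<le> t powr (p - 1)" using p by (simp add: ge_one_powr_ge_zero)
      then show "\<exists>y. DERIV f t :> y \<and> 0 \<le> y"
        using df[of t] t p by (intro exI[of _ "p * t powr (p - 1) - p"]) (simp add: mult_le_cancel_left1)
    qed
  qed
  then show ?thesis unfolding f_def by simp
qed

lemma singular_values_powr_sum_le:
  fixes A :: "real mat"
  assumes A: "A \<in> carrier_mat n n" and p: "0 < p"
    and bound: "\<And>x. x \<in> carrier_vec n \<Longrightarrow> vec_norm (A *\<^sub>v x) \<le> c * vec_norm x"
    and ker: "x \<in> carrier_vec n" "x \<noteq> 0\<^sub>v n" "A *\<^sub>v x = 0\<^sub>v n"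
  shows "(\<Sum>s\<in>#singular_values A. s powr p) \<le> (real n - 1) * c powr p"
proof -
  obtain ws where ws: "orthonormal n ws" "length ws = n"
    and sv: "\<And>q. (\<Sum>s\<in>#singular_values A. s powr q) = (\<Sum>i<n. vec_norm (A *\<^sub>v ws ! i) powr q)"
    and zero: "\<And>x. x \<in> carrier_vec n \<Longrightarrow> x \<noteq> 0\<^sub>v n \<Longrightarrow> A *\<^sub>v x = 0\<^sub>v n \<Longrightarrow> \<exists>k<n. A *\<^sub>v ws ! k = 0\<^sub>v n"
    using singular_values_eigenbasis[OF A] by blast
  obtain k where k: "k < n" "A *\<^sub>v ws ! k = 0\<^sub>v n" using zero[OF ker] by blast
  have le: "vec_norm (A *\<^sub>v ws ! i) \<le> c" if "i < n" for i
    using bound[of "ws ! i"] orthonormal_carrier[OF ws(1)] orthonormal_scalar_prod[OF ws(1)] ws(2) that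
    by (simp add: vec_norm_def)
  have "(\<Sum>s\<in>#singular_values A. s powr p) = (\<Sum>i\<in>{..<n} - {k}. vec_norm (A *\<^sub>v ws ! i) powr p)"
    unfolding sv using sum.remove[of "{..<n}" k "\<lambda>i. vec_norm (A *\<^sub>v ws ! i) powr p"] k
    by (simp add: vec_norm_def)
  also have "\<dots> \<le> (\<Sum>i\<in>{..<n} - {k}. c powr p)"
    by (rule sum_mono) (use le p in \<open>auto intro: powr_mono2 vec_norm_nonneg\<close>)
  also have "\<dots> = (real n - 1) * c powr p" using k by (simp add: of_nat_diff)
  finally show ?thesis .
qed

lemma pairing_le_sum_vec_norm_orthonormal_basis:
  fixes A U :: "real mat"
  assumes ws: "orthonormal n ws" "length ws = n"
    and A: "A \<in> carrier_mat n n" and U: "U \<in> carrier_mat n n"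
    and iso: "\<And>x. x \<in> carrier_vec n \<Longrightarrow> vec_norm (U *\<^sub>v x) = vec_norm x"
  shows "\<bar>\<Sum>a<n. \<Sum>b<n. U $$ (a, b) * A $$ (a, b)\<bar> \<le> (\<Sum>i<n. vec_norm (A *\<^sub>v ws ! i))"
proof -
  have "\<bar>\<Sum>a<n. \<Sum>b<n. U $$ (a, b) * A $$ (a, b)\<bar> = \<bar>\<Sum>i<n. (U *\<^sub>v ws ! i) \<bullet> (A *\<^sub>v ws ! i)\<bar>"
    using orthonormal_basis_sum_scalar_prod[OF ws U A] by simp
  also have "\<dots> \<le> (\<Sum>i<n. \<bar>(U *\<^sub>v ws ! i) \<bullet> (A *\<^sub>v ws ! i)\<bar>)" by (rule sum_abs)
  also have "\<dots> \<le> (\<Sum>i<n. vec_norm (A *\<^sub>v ws ! i))"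
  proof (rule sum_mono)
    fix i assume "i \<in> {..<n}"
    then have w: "ws ! i \<in> carrier_vec n" and unit: "ws ! i \<bullet> ws ! i = 1"
      using orthonormal_carrier[OF ws(1)] orthonormal_scalar_prod[OF ws(1)] ws(2) by auto
    show "\<bar>(U *\<^sub>v ws ! i) \<bullet> (A *\<^sub>v ws ! i)\<bar> \<le> vec_norm (A *\<^sub>v ws ! i)"
      using abs_scalar_prod_le_vec_norm[of "U *\<^sub>v ws ! i" n "A *\<^sub>v ws ! i"] U A w
      unfolding iso[OF w] by (simp add: vec_norm_def unit)
  qed
  finally show ?thesis .
qed

text \<open>Bernoulli's inequality at the n - 1 singular values other than a zero one.\<close>

lemma singular_values_powr_sum_ge:
  fixes A U :: "real mat"
  assumes A: "A \<in> carrier_mat n n" and U: "U \<in> carrier_mat n n"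
    and iso: "\<And>x. x \<in> carrier_vec n \<Longrightarrow> vec_norm (U *\<^sub>v x) = vec_norm x"
    and p: "1 \<le> p"
    and ker: "x \<in> carrier_vec n" "x \<noteq> 0\<^sub>v n" "A *\<^sub>v x = 0\<^sub>v n"
  shows "real n - 1 + p * (\<bar>\<Sum>a<n. \<Sum>b<n. U $$ (a, b) * A $$ (a, b)\<bar> - (real n - 1))
    \<le> (\<Sum>s\<in>#singular_values A. s powr p)"
proof -
  obtain ws where ws: "orthonormal n ws" "length ws = n"
    and sv: "\<And>q. (\<Sum>s\<in>#singular_values A. s powr q) = (\<Sum>i<n. vec_norm (A *\<^sub>v ws ! i) powr q)"
    and zero: "\<And>x. x \<in> carrier_vec n \<Longrightarrow> x \<noteq> 0\<^sub>v n \<Longrightarrow> A *\<^sub>v x = 0\<^sub>v n \<Longrightarrow> \<exists>k<n. A *\<^sub>v ws ! k = 0\<^sub>v n"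
    using singular_values_eigenbasis[OF A] by blast
  obtain k where k: "k < n" "A *\<^sub>v ws ! k = 0\<^sub>v n" using zero[OF ker] by blast
  define s where "s i = vec_norm (A *\<^sub>v ws ! i)" for i
  have s0: "s k = 0" unfolding s_def k(2) by (simp add: vec_norm_def)
  let ?K = "{..<n} - {k}"
  have sK: "(\<Sum>i\<in>?K. f i) = (\<Sum>i<n. f i)" if "f k = 0" for f :: "nat \<Rightarrow> real"
    using sum.remove[of "{..<n}" k f] k that by simp
  have "real n - 1 + p * (\<bar>\<Sum>a<n. \<Sum>b<n. U $$ (a, b) * A $$ (a, b)\<bar> - (real n - 1))
      \<le> real n - 1 + p * ((\<Sum>i<n. s i) - (real n - 1))"
    using pairing_le_sum_vec_norm_orthonormal_basis[OF ws A U iso] p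
    unfolding s_def by (simp add: mult_left_mono)
  also have "\<dots> = (\<Sum>i\<in>?K. 1 + p * (s i - 1))"
    using k sK[of s, OF s0]
    by (simp add: sum.distrib sum_subtractf sum_distrib_left[symmetric] right_diff_distrib of_nat_diff)
      (simp add: algebra_simps)
  also have "\<dots> \<le> (\<Sum>i\<in>?K. s i powr p)"
    by (rule sum_mono) (use p in \<open>auto intro: Bernoulli_inequality_powr simp: s_def vec_norm_nonneg\<close>)
  also have "\<dots> = (\<Sum>s\<in>#singular_values A. s powr p)"
    unfolding sv using sK[of "\<lambda>i. s i powr p"] s0 by (simp add: s_def)
  finally show ?thesis .
qed

section \<open>Doubly stochastic matrices\<close>

lemma doubly_stochasticD:
  assumes "D \<in> doubly_stochastic n"
  shows "D \<in> carrier_mat n n" "\<And>i j. i < n \<Longrightarrow> j < n \<Longrightarrow> 0 \<le> D $$ (i, j)"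
    "\<And>i. i < n \<Longrightarrow> (\<Sum>j<n. D $$ (i, j)) = 1" "\<And>j. j < n \<Longrightarrow> (\<Sum>i<n. D $$ (i, j)) = 1"
  using assms unfolding doubly_stochastic_def by auto

lemma J_mat_doubly_stochastic: "J_mat n \<in> doubly_stochastic n"
  unfolding doubly_stochastic_def J_mat_def by auto

lemma doubly_stochastic_mult_ones:
  assumes "D \<in> doubly_stochastic n"
  shows "D *\<^sub>v vec n (\<lambda>_. 1) = vec n (\<lambda>_. 1)"
proof (rule eq_vecI)
  show "(D *\<^sub>v vec n (\<lambda>_. 1)) $ i = vec n (\<lambda>_. 1) $ i" if "i < dim_vec (vec n (\<lambda>_. 1 :: real))" for i
    using that doubly_stochasticD(3)[OF assms, of i] doubly_stochasticD(1)[OF assms] by (simp add: scalar_prod_def atLeast0LessThan)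
qed (use doubly_stochasticD(1)[OF assms] in simp)

lemma doubly_stochastic_diff_mult_ones:
  assumes D: "D \<in> doubly_stochastic n" and B: "B \<in> doubly_stochastic n"
  shows "(D - B) *\<^sub>v vec n (\<lambda>_. 1) = 0\<^sub>v n"
  using doubly_stochasticD(1)[OF D] doubly_stochasticD(1)[OF B]
  by (simp add: minus_mult_distrib_mat_vec doubly_stochastic_mult_ones[OF D] doubly_stochastic_mult_ones[OF B])

lemma ones_vec_nonzero:
  assumes "1 \<le> n"
  shows "vec n (\<lambda>_. 1 :: real) \<noteq> 0\<^sub>v n"
proof
  assume "vec n (\<lambda>_. 1 :: real) = 0\<^sub>v n"
  from arg_cong[OF this, of "\<lambda>v. v $ 0"] show False using assms by simp
qed

lemma square_convex_combination_le:
  fixes b x :: "nat \<Rightarrow> real"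
  assumes nonneg: "\<And>j. j < n \<Longrightarrow> 0 \<le> b j" and sum: "(\<Sum>j<n. b j) = 1"
  shows "(\<Sum>j<n. b j * x j)\<^sup>2 \<le> (\<Sum>j<n. b j * (x j)\<^sup>2)"
proof -
  define m where "m = (\<Sum>j<n. b j * x j)"
  have "0 \<le> (\<Sum>j<n. b j * (x j - m)\<^sup>2)" by (intro sum_nonneg) (simp add: nonneg)
  also have "\<dots> = (\<Sum>j<n. b j * (x j)\<^sup>2) - 2 * m * (\<Sum>j<n. b j * x j) + m\<^sup>2 * (\<Sum>j<n. b j)"
    by (simp add: power2_diff algebra_simps sum.distrib sum_subtractf sum_distrib_left sum_distrib_right)
  also have "\<dots> = (\<Sum>j<n. b j * (x j)\<^sup>2) - m\<^sup>2" unfolding m_def[symmetric] sum by (simp add: power2_eq_square)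
  finally show ?thesis unfolding m_def by simp
qed

lemma doubly_stochastic_contraction:
  assumes B: "B \<in> doubly_stochastic n" and x: "x \<in> carrier_vec n"
  shows "(B *\<^sub>v x) \<bullet> (B *\<^sub>v x) \<le> x \<bullet> x"
proof -
  note Bf = doubly_stochasticD[OF B]
  have "(B *\<^sub>v x) \<bullet> (B *\<^sub>v x) = (\<Sum>i<n. (\<Sum>j<n. B $$ (i, j) * x $ j)\<^sup>2)"
    using Bf(1) x by (simp add: scalar_prod_def atLeast0LessThan power2_eq_square)
  also have "\<dots> \<le> (\<Sum>i<n. \<Sum>j<n. B $$ (i, j) * (x $ j)\<^sup>2)"
    by (intro sum_mono square_convex_combination_le) (auto intro: Bf)
  also have "\<dots> = (\<Sum>j<n. (\<Sum>i<n. B $$ (i, j)) * (x $ j)\<^sup>2)"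
    by (subst sum.swap) (simp add: sum_distrib_right)
  also have "\<dots> = x \<bullet> x"
    using x by (simp add: Bf(4) scalar_prod_def atLeast0LessThan power2_eq_square)
  finally show ?thesis .
qed

lemma J_minus_doubly_stochastic_contraction:
  assumes B: "B \<in> doubly_stochastic n" and x: "x \<in> carrier_vec n"
  shows "((J_mat n - B) *\<^sub>v x) \<bullet> ((J_mat n - B) *\<^sub>v x) \<le> x \<bullet> x"
proof -
  note Bf = doubly_stochasticD[OF B]
  define m where "m = (\<Sum>j<n. x $ j) / real n"
  define y where "y = B *\<^sub>v x"
  have y: "y \<in> carrier_vec n" unfolding y_def using Bf(1) x by simp
  have entry: "((J_mat n - B) *\<^sub>v x) $ i = m - y $ i" if i: "i < n" for i
    using i x Bf(1) unfolding m_def y_def J_mat_def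
    by (simp add: scalar_prod_def atLeast0LessThan left_diff_distrib sum_subtractf sum_divide_distrib)
  have sum_y: "(\<Sum>i<n. y $ i) = real n * m"
  proof -
    have "(\<Sum>i<n. y $ i) = (\<Sum>j<n. (\<Sum>i<n. B $$ (i, j)) * x $ j)"
      unfolding y_def using Bf(1) x
      by (simp add: scalar_prod_def atLeast0LessThan sum_distrib_right) (rule sum.swap)
    then show ?thesis unfolding m_def by (cases "n = 0") (simp_all add: Bf(4))
  qed
  have "((J_mat n - B) *\<^sub>v x) \<bullet> ((J_mat n - B) *\<^sub>v x) = (\<Sum>i<n. (m - y $ i)\<^sup>2)"
    unfolding scalar_prod_def using Bf(1)
    by (simp add: atLeast0LessThan entry power2_eq_square del: index_mult_mat_vec)
  also have "\<dots> = real n * m\<^sup>2 - 2 * m * (\<Sum>i<n. y $ i) + (\<Sum>i<n. (y $ i)\<^sup>2)"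
    by (simp add: power2_diff sum.distrib sum_subtractf sum_distrib_left)
  also have "\<dots> = (\<Sum>i<n. (y $ i)\<^sup>2) - real n * m\<^sup>2"
    unfolding sum_y by (simp add: power2_eq_square)
  also have "\<dots> \<le> y \<bullet> y"
    using y by (simp add: scalar_prod_def atLeast0LessThan power2_eq_square)
  also have "\<dots> \<le> x \<bullet> x" unfolding y_def by (rule doubly_stochastic_contraction[OF B x])
  finally show ?thesis .
qed

lemma doubly_stochastic_diff_bound:
  assumes D: "D \<in> doubly_stochastic n" and B: "B \<in> doubly_stochastic n" and x: "x \<in> carrier_vec n"
  shows "((D - B) *\<^sub>v x) \<bullet> ((D - B) *\<^sub>v x) \<le> 2\<^sup>2 * (x \<bullet> x)"
proof -
  define u v where "u = D *\<^sub>v x" and "v = B *\<^sub>v x"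
  have u: "u \<in> carrier_vec n" and v: "v \<in> carrier_vec n"
    unfolding u_def v_def using doubly_stochasticD(1)[OF D] doubly_stochasticD(1)[OF B] x by auto
  have "((D - B) *\<^sub>v x) \<bullet> ((D - B) *\<^sub>v x) = (\<Sum>i<n. (u $ i - v $ i)\<^sup>2)"
    unfolding u_def v_def using doubly_stochasticD(1)[OF D] doubly_stochasticD(1)[OF B] x
    by (simp add: minus_mult_distrib_mat_vec scalar_prod_def atLeast0LessThan power2_eq_square)
  also have "\<dots> \<le> (\<Sum>i<n. 2 * (u $ i)\<^sup>2 + 2 * (v $ i)\<^sup>2)"
  proof (rule sum_mono)
    fix i
    have "0 \<le> (u $ i + v $ i)\<^sup>2" by simp
    then show "(u $ i - v $ i)\<^sup>2 \<le> 2 * (u $ i)\<^sup>2 + 2 * (v $ i)\<^sup>2"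
      by (simp add: power2_diff power2_sum)
  qed
  also have "\<dots> = 2 * (u \<bullet> u) + 2 * (v \<bullet> v)"
    using u v by (simp add: scalar_prod_def atLeast0LessThan power2_eq_square sum.distrib sum_distrib_left)
  also have "\<dots> \<le> 2\<^sup>2 * (x \<bullet> x)"
    using doubly_stochastic_contraction[OF D x] doubly_stochastic_contraction[OF B x]
    unfolding u_def v_def by simp
  finally show ?thesis .
qed

section \<open>Permutation matrices and diagonal sums\<close>

definition perm_mat :: "nat \<Rightarrow> (nat \<Rightarrow> nat) \<Rightarrow> real mat" where
  "perm_mat n \<sigma> = mat n n (\<lambda>(i, j). if \<sigma> i = j then 1 else 0)"

definition diag_sum :: "(nat \<Rightarrow> nat) \<Rightarrow> real mat \<Rightarrow> real" where
  "diag_sum \<sigma> D = (\<Sum>i<dim_row D. D $$ (i, \<sigma> i))"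

lemma perm_mat_carrier [simp]: "perm_mat n \<sigma> \<in> carrier_mat n n"
  unfolding perm_mat_def by simp

lemma perm_mat_dim [simp]: "dim_row (perm_mat n \<sigma>) = n" "dim_col (perm_mat n \<sigma>) = n"
  unfolding perm_mat_def by simp_all

lemma permutes_lessThan_less: "\<sigma> permutes {..<n} \<Longrightarrow> i < n \<Longrightarrow> \<sigma> i < n"
  using permutes_in_image by fastforce

lemma perm_mat_mult_vec:
  assumes \<sigma>: "\<sigma> permutes {..<n}" and x: "x \<in> carrier_vec n" and i: "i < n"
  shows "(perm_mat n \<sigma> *\<^sub>v x) $ i = x $ \<sigma> i"
proof -
  have "(perm_mat n \<sigma> *\<^sub>v x) $ i = (\<Sum>j<n. (if \<sigma> i = j then 1 else 0) * x $ j)"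
    using x i by (simp add: perm_mat_def scalar_prod_def atLeast0LessThan)
  also have "\<dots> = (\<Sum>j<n. if j = \<sigma> i then x $ j else 0)" by (rule sum.cong) auto
  finally show ?thesis using permutes_lessThan_less[OF \<sigma> i] by simp
qed

lemma perm_mat_doubly_stochastic:
  assumes \<sigma>: "\<sigma> permutes {..<n}"
  shows "perm_mat n \<sigma> \<in> doubly_stochastic n"
proof -
  have "(\<Sum>i<n. perm_mat n \<sigma> $$ (i, j)) = 1" if j: "j < n" for j
  proof -
    have "(\<Sum>i<n. perm_mat n \<sigma> $$ (i, j)) = (\<Sum>i<n. (\<lambda>a. if a = j then 1 else 0) (\<sigma> i))"
      using j by (intro sum.cong) (auto simp: perm_mat_def)
    also have "\<dots> = (\<Sum>a<n. if a = j then 1 else 0)"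
      by (rule sum.reindex_bij_betw[OF permutes_imp_bij[OF \<sigma>]])
    finally show ?thesis using j by simp
  qed
  moreover have "(\<Sum>j<n. perm_mat n \<sigma> $$ (i, j)) = 1" if i: "i < n" for i
    using i permutes_lessThan_less[OF \<sigma> i] by (simp add: perm_mat_def)
  ultimately show ?thesis unfolding doubly_stochastic_def by (auto simp: perm_mat_def)
qed

lemma perm_mat_vec_norm:
  assumes \<sigma>: "\<sigma> permutes {..<n}" and x: "x \<in> carrier_vec n"
  shows "vec_norm (perm_mat n \<sigma> *\<^sub>v x) = vec_norm x"
proof -
  have "(perm_mat n \<sigma> *\<^sub>v x) \<bullet> (perm_mat n \<sigma> *\<^sub>v x) = (\<Sum>i<n. (\<lambda>a. x $ a * x $ a) (\<sigma> i))"
    unfolding scalar_prod_def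
    by (simp add: atLeast0LessThan perm_mat_mult_vec[OF \<sigma> x] del: index_mult_mat_vec)
  also have "\<dots> = (\<Sum>a<n. x $ a * x $ a)"
    by (rule sum.reindex_bij_betw[OF permutes_imp_bij[OF \<sigma>]])
  also have "\<dots> = x \<bullet> x" using x by (simp add: scalar_prod_def atLeast0LessThan)
  finally show ?thesis by (simp add: vec_norm_def)
qed

lemma perm_mat_pairing:
  assumes \<sigma>: "\<sigma> permutes {..<n}"
  shows "(\<Sum>a<n. \<Sum>b<n. perm_mat n \<sigma> $$ (a, b) * X $$ (a, b)) = (\<Sum>a<n. X $$ (a, \<sigma> a))"
proof (rule sum.cong[OF refl])
  fix a assume "a \<in> {..<n}"
  then have a: "a < n" by simp
  have "(\<Sum>b<n. perm_mat n \<sigma> $$ (a, b) * X $$ (a, b)) = (\<Sum>b<n. if b = \<sigma> a then X $$ (a, \<sigma> a) else 0)"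
    using a by (intro sum.cong) (auto simp: perm_mat_def)
  then show "(\<Sum>b<n. perm_mat n \<sigma> $$ (a, b) * X $$ (a, b)) = X $$ (a, \<sigma> a)"
    using permutes_lessThan_less[OF \<sigma> a] by simp
qed

lemma diag_sum_transpose_diff:
  assumes D: "D \<in> carrier_mat n n" and i: "i < n" and j: "j < n" and ij: "i \<noteq> j"
  shows "diag_sum \<sigma> D - diag_sum (\<sigma> \<circ> transpose i j) D
    = D $$ (i, \<sigma> i) + D $$ (j, \<sigma> j) - D $$ (i, \<sigma> j) - D $$ (j, \<sigma> i)"
proof -
  have "diag_sum \<sigma> D - diag_sum (\<sigma> \<circ> transpose i j) D
      = (\<Sum>l<n. D $$ (l, \<sigma> l) - D $$ (l, \<sigma> (transpose i j l)))"
    unfolding diag_sum_def using D by (simp add: sum_subtractf)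
  also have "\<dots> = (\<Sum>l<n. (if l = i then D $$ (i, \<sigma> i) - D $$ (i, \<sigma> j) else 0)
          + (if l = j then D $$ (j, \<sigma> j) - D $$ (j, \<sigma> i) else 0))"
    by (rule sum.cong) (use ij in \<open>auto simp: transpose_def\<close>)
  also have "\<dots> = D $$ (i, \<sigma> i) + D $$ (j, \<sigma> j) - D $$ (i, \<sigma> j) - D $$ (j, \<sigma> i)"
    using i j by (simp add: sum.distrib)
  finally show ?thesis .
qed

lemma exists_permutes_two_values:
  assumes "i < n" "j < n" "a < n" "b < n" "i \<noteq> j" "a \<noteq> b"
  obtains \<sigma> where "\<sigma> permutes {..<n}" "\<sigma> i = a" "\<sigma> j = b"
proof
  define j' where "j' = transpose i a j"
  have j': "j' < n" "j' \<noteq> a" unfolding j'_def transpose_def using assms by auto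
  show "(transpose j' b \<circ> transpose i a) permutes {..<n}"
    by (intro permutes_compose permutes_swap_id) (use assms j' in auto)
  show "(transpose j' b \<circ> transpose i a) i = a" using j' assms by (simp add: transpose_def)
  show "(transpose j' b \<circ> transpose i a) j = b" by (simp add: j'_def)
qed

text \<open>If all diagonal sums agree, comparing \<sigma> with \<sigma> \<circ> transpose i j gives
  D(i,a) + D(j,b) = D(i,b) + D(j,a); summing over j then shows that the rows are constant.\<close>

lemma diag_sums_eq_1_imp_J_mat:
  assumes D: "D \<in> doubly_stochastic n"
    and all: "\<And>\<sigma>. \<sigma> permutes {..<n} \<Longrightarrow> diag_sum \<sigma> D = 1"
  shows "D = J_mat n"
proof -
  note Df = doubly_stochasticD[OF D]
  have exchange: "D $$ (i, a) + D $$ (j, b) = D $$ (i, b) + D $$ (j, a)"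
    if i: "i < n" and j: "j < n" and a: "a < n" and b: "b < n" for i j a b
  proof (cases "i = j \<or> a = b")
    case False
    then obtain \<sigma> where \<sigma>: "\<sigma> permutes {..<n}" "\<sigma> i = a" "\<sigma> j = b"
      using exists_permutes_two_values[OF i j a b] by blast
    have "\<sigma> \<circ> transpose i j permutes {..<n}"
      by (intro permutes_compose permutes_swap_id \<sigma>(1)) (use i j in auto)
    then have "diag_sum \<sigma> D - diag_sum (\<sigma> \<circ> transpose i j) D = 0" using all \<sigma>(1) by simp
    then show ?thesis using diag_sum_transpose_diff[OF Df(1) i j, of \<sigma>] False \<sigma> by simp
  qed auto
  have row_const: "D $$ (i, a) = D $$ (i, b)" if i: "i < n" and a: "a < n" and b: "b < n" for i a b
  proof -
    have "(\<Sum>j<n. D $$ (i, a) + D $$ (j, b)) = (\<Sum>j<n. D $$ (i, b) + D $$ (j, a))"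
      by (intro sum.cong refl) (use exchange i a b in auto)
    then show ?thesis using Df(4) a b i by (simp add: sum.distrib)
  qed
  show ?thesis
  proof (rule eq_matI)
    fix i a assume "i < dim_row (J_mat n)" "a < dim_col (J_mat n)"
    then have i: "i < n" and a: "a < n" by (auto simp: J_mat_def)
    have "1 = (\<Sum>b<n. D $$ (i, a))" using Df(3)[OF i] row_const[OF i a] by (metis (no_types, lifting) lessThan_iff sum.cong)
    then show "D $$ (i, a) = J_mat n $$ (i, a)" using i a by (simp add: J_mat_def field_simps)
  qed (use Df(1) in \<open>simp_all add: J_mat_def\<close>)
qed

definition cyclic_shift :: "nat \<Rightarrow> nat \<Rightarrow> nat \<Rightarrow> nat" where
  "cyclic_shift n k x = (if x < n then (x + k) mod n else x)"

lemma cyclic_shift_permutes: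
  assumes k: "k \<le> n"
  shows "cyclic_shift n k permutes {..<n}"
proof (rule bij_imp_permutes)
  have inverse: "cyclic_shift n (n - k) (cyclic_shift n k x) = x" if x: "x < n" for x
  proof -
    have "cyclic_shift n (n - k) (cyclic_shift n k x) = ((x + k) mod n + (n - k)) mod n"
      using x by (simp add: cyclic_shift_def)
    also have "\<dots> = (x + k + (n - k)) mod n" by (rule mod_add_left_eq)
    also have "x + k + (n - k) = x + n" using k by simp
    finally show ?thesis using x by simp
  qed
  have inj: "inj_on (cyclic_shift n k) {..<n}"
    by (rule inj_on_inverseI[of _ "cyclic_shift n (n - k)"]) (use inverse in auto)
  moreover have "cyclic_shift n k ` {..<n} \<subseteq> {..<n}" by (auto simp: cyclic_shift_def)
  ultimately show "bij_betw (cyclic_shift n k) {..<n} {..<n}"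
    using endo_inj_surj[OF _ _ inj] by (auto simp: bij_betw_def)
  show "cyclic_shift n k x = x" if "x \<notin> {..<n}" for x using that by (simp add: cyclic_shift_def)
qed

text \<open>The n cyclic shifts of \<sigma> together meet every entry of every row exactly once.\<close>

lemma sum_diag_sum_cyclic_shifts:
  assumes D: "D \<in> doubly_stochastic n" and \<sigma>: "\<sigma> permutes {..<n}"
  shows "(\<Sum>k<n. diag_sum (cyclic_shift n k \<circ> \<sigma>) D) = real n"
proof -
  note Df = doubly_stochasticD[OF D]
  have "(\<Sum>k<n. diag_sum (cyclic_shift n k \<circ> \<sigma>) D) = (\<Sum>i<n. \<Sum>k<n. D $$ (i, cyclic_shift n (\<sigma> i) k))"
    unfolding diag_sum_def using Df(1)
    by (subst sum.swap) (auto simp: cyclic_shift_def add.commute permutes_lessThan_less[OF \<sigma>] intro!: sum.cong)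
  also have "\<dots> = (\<Sum>i<n. (1::real))"
  proof (rule sum.cong[OF refl])
    fix i assume "i \<in> {..<n}"
    then have i: "i < n" by simp
    have "(\<Sum>k<n. D $$ (i, cyclic_shift n (\<sigma> i) k)) = (\<Sum>j<n. D $$ (i, j))"
      using permutes_lessThan_less[OF \<sigma> i]
      by (intro sum.reindex_bij_betw permutes_imp_bij cyclic_shift_permutes) simp
    then show "(\<Sum>k<n. D $$ (i, cyclic_shift n (\<sigma> i) k)) = 1" using Df(3)[OF i] by simp
  qed
  finally show ?thesis by simp
qed

text \<open>Averaging over cyclic shifts: some permutation has diagonal sum at most the mean 1, and if
  none has a smaller one, then all diagonal sums equal 1.\<close>

lemma exists_permutes_diag_sum_le_1:
  assumes D: "D \<in> doubly_stochastic n"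
  obtains \<sigma> where "\<sigma> permutes {..<n}" "diag_sum \<sigma> D \<le> 1" "D \<noteq> J_mat n \<Longrightarrow> diag_sum \<sigma> D < 1"
proof (cases "\<exists>\<sigma>. \<sigma> permutes {..<n} \<and> diag_sum \<sigma> D < 1")
  case True
  then show ?thesis using that by force
next
  case False
  have "\<not> diag_sum id D < 1" using False permutes_id[of "{..<n}"] by blast
  then have n: "0 < n" using doubly_stochasticD(1)[OF D] unfolding diag_sum_def by (cases n) auto
  have all: "diag_sum \<sigma> D = 1" if \<sigma>: "\<sigma> permutes {..<n}" for \<sigma>
  proof -
    have shifts: "cyclic_shift n k \<circ> \<sigma> permutes {..<n}" if "k < n" for k
      using that by (intro permutes_compose[OF \<sigma>] cyclic_shift_permutes) simp
    have ge: "0 \<le> diag_sum (cyclic_shift n k \<circ> \<sigma>) D - 1" if "k \<in> {..<n}" for k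
      using False shifts that by force
    have "(\<Sum>k<n. diag_sum (cyclic_shift n k \<circ> \<sigma>) D - 1) = 0"
      using sum_diag_sum_cyclic_shifts[OF D \<sigma>] by (simp add: sum_subtractf)
    then have "diag_sum (cyclic_shift n 0 \<circ> \<sigma>) D - 1 = 0"
      by (subst (asm) sum_nonneg_eq_0_iff) (use ge n in auto)
    moreover have "cyclic_shift n 0 = id" by (auto simp: cyclic_shift_def)
    ultimately show ?thesis by simp
  qed
  then have "D = J_mat n" by (rule diag_sums_eq_1_imp_J_mat[OF D])
  then show ?thesis using that[of id] all[OF permutes_id] by simp
qed

section \<open>The Chebyshev center\<close>

lemma sum_mset_powr_nonneg: "0 \<le> (\<Sum>s\<in>#M. (s :: real) powr p)"
  by (induct M) auto

lemma schatten_norm_le: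
  assumes "0 < p" and "(\<Sum>s\<in>#singular_values A. s powr p) \<le> c"
  shows "schatten_norm p A \<le> c powr (1 / p)"
  unfolding schatten_norm_def using assms sum_mset_powr_nonneg by (intro powr_mono2) auto

lemma schatten_norm_ge:
  assumes "0 < p" and "0 \<le> c" and "c \<le> (\<Sum>s\<in>#singular_values A. s powr p)"
  shows "c powr (1 / p) \<le> schatten_norm p A"
  unfolding schatten_norm_def using assms by (intro powr_mono2) auto

lemma schatten_norm_gt:
  assumes "0 < p" and "0 \<le> c" and "c < (\<Sum>s\<in>#singular_values A. s powr p)"
  shows "c powr (1 / p) < schatten_norm p A"
  unfolding schatten_norm_def using assms by (intro powr_less_mono2) auto

lemma schatten_norm_J_mat_minus_le:
  assumes B: "B \<in> doubly_stochastic n" and n: "1 \<le> n" and p: "0 < p"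
  shows "schatten_norm p (J_mat n - B) \<le> (real n - 1) powr (1 / p)"
proof (rule schatten_norm_le[OF p])
  have JB: "J_mat n - B \<in> carrier_mat n n"
    using doubly_stochasticD(1)[OF B] by (simp add: minus_carrier_mat)
  have "(\<Sum>s\<in>#singular_values (J_mat n - B). s powr p) \<le> (real n - 1) * 1 powr p"
  proof (rule singular_values_powr_sum_le[OF JB p])
    show "vec_norm ((J_mat n - B) *\<^sub>v x) \<le> 1 * vec_norm x" if "x \<in> carrier_vec n" for x
      by (rule vec_norm_le_scale) (use J_minus_doubly_stochastic_contraction[OF B that] in simp_all)
  qed (use ones_vec_nonzero[OF n] doubly_stochastic_diff_mult_ones[OF J_mat_doubly_stochastic B] in auto)
  then show "(\<Sum>s\<in>#singular_values (J_mat n - B). s powr p) \<le> real n - 1" by simp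
qed

lemma schatten_norm_le_cheb_dist:
  assumes D: "D \<in> doubly_stochastic n" and B: "B \<in> doubly_stochastic n" and n: "1 \<le> n" and p: "0 < p"
  shows "schatten_norm p (D - B) \<le> cheb_dist n p D"
  unfolding cheb_dist_def
proof (rule cSUP_upper[OF B], rule bdd_aboveI2)
  fix B assume B: "B \<in> doubly_stochastic n"
  have DB: "D - B \<in> carrier_mat n n" using doubly_stochasticD(1)[OF B] by (simp add: minus_carrier_mat)
  have "(\<Sum>s\<in>#singular_values (D - B). s powr p) \<le> (real n - 1) * 2 powr p"
  proof (rule singular_values_powr_sum_le[OF DB p])
    show "vec_norm ((D - B) *\<^sub>v x) \<le> 2 * vec_norm x" if "x \<in> carrier_vec n" for x
      by (rule vec_norm_le_scale) (use doubly_stochastic_diff_bound[OF D B that] in simp_all)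
  qed (use ones_vec_nonzero[OF n] doubly_stochastic_diff_mult_ones[OF D B] in auto)
  then show "schatten_norm p (D - B) \<le> ((real n - 1) * 2 powr p) powr (1 / p)"
    by (rule schatten_norm_le[OF p])
qed

lemma cheb_dist_lower_bound:
  assumes D: "D \<in> doubly_stochastic n" and n: "1 \<le> n" and p: "1 \<le> p"
  shows "(real n - 1) powr (1 / p) \<le> cheb_dist n p D"
    and "D \<noteq> J_mat n \<Longrightarrow> (real n - 1) powr (1 / p) < cheb_dist n p D"
proof -
  obtain \<sigma> where \<sigma>: "\<sigma> permutes {..<n}" "diag_sum \<sigma> D \<le> 1" "D \<noteq> J_mat n \<Longrightarrow> diag_sum \<sigma> D < 1"
    using exists_permutes_diag_sum_le_1[OF D] by blast
  define P where "P = perm_mat n \<sigma>"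
  have P: "P \<in> doubly_stochastic n" unfolding P_def by (rule perm_mat_doubly_stochastic[OF \<sigma>(1)])
  have Dc: "D \<in> carrier_mat n n" by (rule doubly_stochasticD(1)[OF D])
  have DP: "D - P \<in> carrier_mat n n" unfolding P_def by (simp add: minus_carrier_mat)
  have "(\<Sum>a<n. \<Sum>b<n. P $$ (a, b) * (D - P) $$ (a, b)) = (\<Sum>a<n. D $$ (a, \<sigma> a) - 1)"
    unfolding P_def perm_mat_pairing[OF \<sigma>(1)] using Dc permutes_lessThan_less[OF \<sigma>(1)]
    by (intro sum.cong) (auto simp: perm_mat_def)
  also have "\<dots> = diag_sum \<sigma> D - real n"
    using Dc by (simp add: diag_sum_def sum_subtractf)
  finally have "real n - 1 + p * (\<bar>diag_sum \<sigma> D - real n\<bar> - (real n - 1))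
      \<le> (\<Sum>s\<in>#singular_values (D - P). s powr p)"
    using singular_values_powr_sum_ge[OF DP _ _ p, of P "vec n (\<lambda>_. 1)"]
      perm_mat_vec_norm[OF \<sigma>(1)] ones_vec_nonzero[OF n] doubly_stochastic_diff_mult_ones[OF D P]
    unfolding P_def by simp
  moreover have "1 - diag_sum \<sigma> D \<le> \<bar>diag_sum \<sigma> D - real n\<bar> - (real n - 1)" by simp
  ultimately have lower: "real n - 1 + p * (1 - diag_sum \<sigma> D) \<le> (\<Sum>s\<in>#singular_values (D - P). s powr p)"
    using p by (smt (verit) mult_left_mono)
  have dist: "schatten_norm p (D - P) \<le> cheb_dist n p D"
    using schatten_norm_le_cheb_dist[OF D P n] p by simp
  have n0: "0 \<le> real n - 1" using n by simp
  show "(real n - 1) powr (1 / p) \<le> cheb_dist n p D"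
    using schatten_norm_ge[of p "real n - 1" "D - P"] lower \<sigma>(2) p n0 dist
    by (smt (verit) mult_nonneg_nonneg)
  show "(real n - 1) powr (1 / p) < cheb_dist n p D" if "D \<noteq> J_mat n"
    using schatten_norm_gt[of p "real n - 1" "D - P"] lower \<sigma>(3)[OF that] p n0 dist
    by (smt (verit) mult_pos_pos)
qed

theorem mainTheorem9:
  fixes n :: nat and p :: real
  assumes "n \<ge> 1" and "1 \<le> p"
  shows "J_mat n \<in> doubly_stochastic n
    \<and> (\<forall>D\<in>doubly_stochastic n. cheb_dist n p (J_mat n) \<le> cheb_dist n p D)
    \<and> (\<forall>D\<in>doubly_stochastic n. cheb_dist n p D \<le> cheb_dist n p (J_mat n) \<longrightarrow> D = J_mat n)
    \<and> (INF D\<in>doubly_stochastic n. cheb_dist n p D) = (real n - 1) powr (1 / p)"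
proof -
  let ?\<Omega> = "doubly_stochastic n" and ?r = "(real n - 1) powr (1 / p)"
  have J: "J_mat n \<in> ?\<Omega>" by (rule J_mat_doubly_stochastic)
  note lower = cheb_dist_lower_bound[OF _ assms]
  have "cheb_dist n p (J_mat n) \<le> ?r"
    unfolding cheb_dist_def using J schatten_norm_J_mat_minus_le assms
    by (intro cSUP_least) auto
  with lower(1)[OF J] have J_radius: "cheb_dist n p (J_mat n) = ?r" by simp
  have "(INF D\<in>?\<Omega>. cheb_dist n p D) = ?r"
  proof (rule antisym)
    show "(INF D\<in>?\<Omega>. cheb_dist n p D) \<le> ?r"
      using cINF_lower[OF bdd_belowI2[of _ ?r "cheb_dist n p"] J] lower(1) J_radius by simp
    show "?r \<le> (INF D\<in>?\<Omega>. cheb_dist n p D)"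
      using J lower(1) by (intro cINF_greatest) auto
  qed
  then show ?thesis using J J_radius lower by fastforce
qed

end
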